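(* Let $p\in(0,1)$ and let $\{X_n,n\geq1\}$ be a $\varphi$-mixing sequence of random variables with common marginal distribution function $F$, whose mixing coefficients satisfy $\sum_{n=1}^\infty\varphi^{1/2}(n)<\infty$. Let $\xi_p=\inf\{x:F(x)\geq p\}$ and $\xi_{p,n}=\inf\{x:F_n(x)\geq p\}$. Assume that $F$ is differentiable at $\xi_p$ with $F'(\xi_p)=f(\xi_p)>0$, and that $f'$ (the derivative of the density $f=F'$) is bounded in a neighborhood $\mathscr{N}_p$ of $\xi_p$. Then for any $\delta>0$, with probability 1, $$|\xi_{p,n}-\xi_p|\leq\frac{(2\sqrt{C_3}+\delta)(\log n)^{1/2}}{f(\xi_p)\,n^{1/2}}\quad\text{for all } n\text{ sufficiently large},$$ where $C_3=4\big[1+4\sum_{n=1}^\infty\varphi^{1/2}(n)\big]$.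
   Context: All random variables are defined on a probability space $(\Omega,\mathcal{F},P)$. $F_n(x)=\frac1n\sum_{i=1}^n I(X_i\leq x)$ is the empirical distribution function of $X_1,\dots,X_n$. For $n\leq m$ let $\mathcal{F}_n^m=\sigma(X_i,n\leq i\leq m)$. For sub-$\sigma$-algebras $\mathcal{B},\mathcal{R}$ let $\varphi(\mathcal{B},\mathcal{R})=\sup_{A\in\mathcal{B},B\in\mathcal{R},P(A)>0}|P(B\mid A)-P(B)|$, and the mixing coefficients are $\varphi(n)=\sup_{k\geq1}\varphi(\mathcal{F}_1^k,\mathcal{F}_{k+n}^\infty)$. The sequence is called $\varphi$-mixing if $\varphi(n)\downarrow0$ as $n\to\infty$. *)

theory Defs
  imports "HOL-Probability.Probability"
begin

text \<open>Random variables are indexed from 1: X 1, X 2, ... (X 0 is ignored).\<close>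

definition gen_sigma :: "'a measure \<Rightarrow> (nat \<Rightarrow> 'a \<Rightarrow> real) \<Rightarrow> nat set \<Rightarrow> 'a set set" where
  "gen_sigma M X I = sigma_sets (space M) (\<Union>i\<in>I. {X i -` B \<inter> space M | B. B \<in> sets borel})"

definition phi_coef :: "'a measure \<Rightarrow> 'a set set \<Rightarrow> 'a set set \<Rightarrow> real" where
  "phi_coef M \<B> \<R> = Sup {\<bar>measure M (A \<inter> B) / measure M A - measure M B\<bar> | A B.
      A \<in> \<B> \<and> B \<in> \<R> \<and> measure M A > 0}"

definition phi_mix :: "'a measure \<Rightarrow> (nat \<Rightarrow> 'a \<Rightarrow> real) \<Rightarrow> nat \<Rightarrow> real" where
  "phi_mix M X n = (SUP k\<in>{1..}. phi_coef M (gen_sigma M X {1..k}) (gen_sigma M X {k+n..}))"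

definition phi_mixing :: "'a measure \<Rightarrow> (nat \<Rightarrow> 'a \<Rightarrow> real) \<Rightarrow> bool" where
  "phi_mixing M X \<longleftrightarrow> antimono (phi_mix M X) \<and> (phi_mix M X \<longlonglongrightarrow> 0)"

definition emp_df :: "(nat \<Rightarrow> 'a \<Rightarrow> real) \<Rightarrow> nat \<Rightarrow> 'a \<Rightarrow> real \<Rightarrow> real" where
  "emp_df X n \<omega> x = (1 / real n) * (\<Sum>i=1..n. if X i \<omega> \<le> x then 1 else 0)"

definition quantile :: "(real \<Rightarrow> real) \<Rightarrow> real \<Rightarrow> real" where
  "quantile G p = Inf {x. G x \<ge> p}"

end

theory Submission
  imports Defs "HOL-Real_Asymp.Real_Asymp"
begin

(* Put Y_i = +-(1{X_i <= x} - F x).  If |xi_{p,n} - xi_p| > eps_n, then for x = xi_p + eps_n or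
   x = xi_p - eps_n the sum of the Y_i (with the appropriate sign) is at least n f(xi_p) eps_n (1 - o(1)),
   i.e. of order C sqrt (n log n).  Cut 1..n into alternating blocks of length g ~ n^(1/3).  Blocks of
   equal parity are g apart, so by the phi-mixing covariance inequality the exponential moment of their
   sum is at most the product over the blocks B of E exp(lam S_B) + 6 lam |B| phi(g), and the second
   moment of S_B is at most |B| (1/4 + 2 sum sqrt phi).  Monotonicity gives phi(g) <= (sum sqrt phi)^2 / g^2, so
   with lam ~ sqrt (log n / n) the Chernoff bound makes the probability of such a deviation O(n^-2),
   and Borel-Cantelli finishes the proof. *)

definition gen_measure :: "'a measure \<Rightarrow> (nat \<Rightarrow> 'a \<Rightarrow> real) \<Rightarrow> nat set \<Rightarrow> 'a measure" where
  "gen_measure M X I = sigma (space M) (gen_sigma M X I)"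

lemma gen_sigma_subset_Pow: "gen_sigma M X I \<subseteq> Pow (space M)"
  unfolding gen_sigma_def by (auto dest: sigma_sets_into_sp[rotated])

lemma space_gen_measure[simp]: "space (gen_measure M X I) = space M"
  unfolding gen_measure_def by (simp add: space_measure_of_conv)

lemma sets_gen_measure[simp]: "sets (gen_measure M X I) = gen_sigma M X I"
proof -
  have "sets (gen_measure M X I) = sigma_sets (space M) (gen_sigma M X I)"
    unfolding gen_measure_def by (rule sets_measure_of[OF gen_sigma_subset_Pow])
  also have "\<dots> = gen_sigma M X I"
    unfolding gen_sigma_def by (rule sigma_sets_sigma_sets_eq) auto
  finally show ?thesis .
qed

lemma space_in_gen_sigma: "space M \<in> gen_sigma M X I"
  unfolding gen_sigma_def by (rule sigma_sets_top)

lemma empty_in_gen_sigma: "{} \<in> gen_sigma M X I"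
  unfolding gen_sigma_def by (rule sigma_sets.Empty)

lemma measurable_gen_measure: "i \<in> I \<Longrightarrow> X i \<in> borel_measurable (gen_measure M X I)"
  by (rule measurableI) (auto simp: gen_sigma_def)

lemma gen_sigma_mono: "I \<subseteq> J \<Longrightarrow> gen_sigma M X I \<subseteq> gen_sigma M X J"
  unfolding gen_sigma_def by (rule sigma_sets_mono') blast

lemma measurable_gen_measure_mono:
  fixes f :: "'a \<Rightarrow> 'b::topological_space"
  assumes "I \<subseteq> J" "f \<in> borel_measurable (gen_measure M X I)"
  shows "f \<in> borel_measurable (gen_measure M X J)"
proof (rule measurableI)
  fix A :: "'b set" assume "A \<in> sets borel"
  then have "f -` A \<inter> space (gen_measure M X I) \<in> sets (gen_measure M X I)"
    using assms by (intro measurable_sets) auto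
  then show "f -` A \<inter> space (gen_measure M X J) \<in> sets (gen_measure M X J)"
    using gen_sigma_mono[OF \<open>I \<subseteq> J\<close>, of M X] by auto
qed auto

lemma gen_sigma_preimage:
  assumes "f \<in> borel_measurable (gen_measure M X I)" "S \<in> sets borel"
  shows "{\<omega>\<in>space M. f \<omega> \<in> S} \<in> gen_sigma M X I"
proof -
  have "f -` S \<inter> space (gen_measure M X I) \<in> sets (gen_measure M X I)"
    using assms by (intro measurable_sets)
  moreover have "f -` S \<inter> space (gen_measure M X I) = {\<omega>\<in>space M. f \<omega> \<in> S}" by auto
  ultimately show ?thesis by simp
qed

context prob_space
begin

lemma abs_cond_prob_diff_le_1:
  assumes "A \<in> sets M" "B \<in> sets M" "prob A > 0"
  shows "\<bar>prob (A \<inter> B) / prob A - prob B\<bar> \<le> 1"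
proof -
  have "prob (A \<inter> B) \<le> prob A" using assms by (intro finite_measure_mono) auto
  then have "prob (A \<inter> B) / prob A \<le> 1" "0 \<le> prob (A \<inter> B) / prob A" using assms by auto
  moreover have "prob B \<le> 1" "0 \<le> prob B" by auto
  ultimately show ?thesis unfolding abs_le_iff by linarith
qed

lemma abs_cond_prob_diff_le_phi_coef:
  assumes "\<B> \<subseteq> sets M" "\<R> \<subseteq> sets M" "A \<in> \<B>" "B \<in> \<R>" "prob A > 0"
  shows "\<bar>prob (A \<inter> B) / prob A - prob B\<bar> \<le> phi_coef M \<B> \<R>"
  unfolding phi_coef_def
proof (rule cSup_upper)
  show "\<bar>prob (A \<inter> B) / prob A - prob B\<bar> \<in> {\<bar>prob (A \<inter> B) / prob A - prob B\<bar> | A B.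
      A \<in> \<B> \<and> B \<in> \<R> \<and> prob A > 0}"
    using assms by blast
  show "bdd_above {\<bar>prob (A \<inter> B) / prob A - prob B\<bar> | A B. A \<in> \<B> \<and> B \<in> \<R> \<and> prob A > 0}"
    using assms(1,2) by (intro bdd_aboveI[of _ 1]) (auto intro!: abs_cond_prob_diff_le_1)
qed

lemma phi_coef_nonneg:
  assumes "\<B> \<subseteq> sets M" "\<R> \<subseteq> sets M" "space M \<in> \<B>" "{} \<in> \<R>"
  shows "0 \<le> phi_coef M \<B> \<R>"
  using abs_cond_prob_diff_le_phi_coef[OF assms] by (simp add: prob_space)

lemma phi_coef_le_1:
  assumes "\<B> \<subseteq> sets M" "\<R> \<subseteq> sets M" "space M \<in> \<B>" "{} \<in> \<R>"
  shows "phi_coef M \<B> \<R> \<le> 1"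
proof -
  let ?D = "{\<bar>prob (A \<inter> B) / prob A - prob B\<bar> | A B. A \<in> \<B> \<and> B \<in> \<R> \<and> prob A > 0}"
  have "0 \<in> ?D"
    using assms(3,4) by (intro CollectI exI[of _ "space M"] exI[of _ "{}"]) (auto simp: prob_space)
  moreover have "d \<le> 1" if "d \<in> ?D" for d
    using that assms(1,2) by (auto intro!: abs_cond_prob_diff_le_1)
  ultimately show ?thesis unfolding phi_coef_def by (intro cSup_least) auto
qed

end

locale rv_sequence = prob_space M for M :: "'a measure" +
  fixes X :: "nat \<Rightarrow> 'a \<Rightarrow> real"
  assumes measurable_X: "\<And>i. i \<ge> 1 \<Longrightarrow> X i \<in> borel_measurable M"
begin

lemma gen_sigma_subset_sets: "I \<subseteq> {1..} \<Longrightarrow> gen_sigma M X I \<subseteq> sets M"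
  unfolding gen_sigma_def
  by (rule sets.sigma_sets_subset) (use measurable_X in \<open>auto intro: measurable_sets\<close>)

lemma borel_measurable_gen_measure:
  fixes f :: "'a \<Rightarrow> 'b::topological_space"
  assumes "I \<subseteq> {1..}" "f \<in> borel_measurable (gen_measure M X I)"
  shows "f \<in> borel_measurable M"
proof (rule measurableI)
  fix A :: "'b set" assume "A \<in> sets borel"
  then have "f -` A \<inter> space (gen_measure M X I) \<in> sets (gen_measure M X I)"
    using assms by (intro measurable_sets) auto
  then show "f -` A \<inter> space M \<in> sets M"
    using gen_sigma_subset_sets[OF \<open>I \<subseteq> {1..}\<close>] by auto
qed auto

lemma phi_coef_le_phi_mix:
  "k \<ge> 1 \<Longrightarrow> phi_coef M (gen_sigma M X {1..k}) (gen_sigma M X {k+g..}) \<le> phi_mix M X g"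
  unfolding phi_mix_def
  by (rule cSUP_upper)
     (auto intro!: bdd_aboveI2[where M=1] phi_coef_le_1 gen_sigma_subset_sets
        space_in_gen_sigma empty_in_gen_sigma)

lemma phi_mix_nonneg: "0 \<le> phi_mix M X g"
proof -
  have "0 \<le> phi_coef M (gen_sigma M X {1..1}) (gen_sigma M X {1+g..})"
    by (intro phi_coef_nonneg gen_sigma_subset_sets space_in_gen_sigma empty_in_gen_sigma) auto
  then show ?thesis using phi_coef_le_phi_mix[of 1 g] by linarith
qed

lemma phi_mix_le_1: "phi_mix M X g \<le> 1"
  unfolding phi_mix_def
  by (rule cSUP_least)
     (auto intro!: phi_coef_le_1 gen_sigma_subset_sets space_in_gen_sigma empty_in_gen_sigma)

lemma abs_prob_Int_diff_le_phi_mix: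
  assumes k: "k \<ge> 1" and A: "A \<in> gen_sigma M X {1..k}" and B: "B \<in> gen_sigma M X {k+g..}"
  shows "\<bar>prob (A \<inter> B) - prob A * prob B\<bar> \<le> phi_mix M X g * prob A"
proof (cases "prob A > 0")
  case True
  have "\<bar>prob (A \<inter> B) / prob A - prob B\<bar> \<le> phi_mix M X g"
    using abs_cond_prob_diff_le_phi_coef[OF _ _ A B True] phi_coef_le_phi_mix[OF k, of g] k
      gen_sigma_subset_sets[of "{1..k}"] gen_sigma_subset_sets[of "{k+g..}"]
    by fastforce
  then have "\<bar>prob (A \<inter> B) / prob A - prob B\<bar> * prob A \<le> phi_mix M X g * prob A"
    using True by (intro mult_right_mono) auto
  also have "\<bar>prob (A \<inter> B) / prob A - prob B\<bar> * prob A = \<bar>prob (A \<inter> B) - prob A * prob B\<bar>"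
    using True by (simp add: abs_mult[symmetric] field_simps)
  finally show ?thesis .
next
  case False
  then have "prob A = 0" using measure_nonneg[of M A] by linarith
  moreover have "prob (A \<inter> B) \<le> prob A"
    using A gen_sigma_subset_sets[of "{1..k}"] by (intro finite_measure_mono) auto
  ultimately show ?thesis using measure_nonneg[of M "A \<inter> B"] by simp
qed

end

lemma finite_image_pointwise:
  assumes "finite (f ` S)" "finite (g ` S)"
  shows "finite ((\<lambda>x. h (f x) (g x)) ` S)"
proof (rule finite_subset)
  show "(\<lambda>x. h (f x) (g x)) ` S \<subseteq> case_prod h ` (f ` S \<times> g ` S)" by auto
  show "finite (case_prod h ` (f ` S \<times> g ` S))" using assms by simp
qed

lemma finite_image_comp: "finite (f ` S) \<Longrightarrow> finite ((\<lambda>x. h (f x)) ` S)"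
  using finite_imageI[of "f ` S" h] by (simp add: image_image)

lemma finite_image_sum:
  fixes Y :: "'i \<Rightarrow> 'a \<Rightarrow> 'b::comm_monoid_add"
  assumes "finite I" "\<And>i. i \<in> I \<Longrightarrow> finite (Y i ` S)"
  shows "finite ((\<lambda>x. \<Sum>i\<in>I. Y i x) ` S)"
  using assms
proof (induction I rule: finite_induct)
  case empty then show ?case by (simp add: image_constant_conv)
next
  case (insert i I)
  then show ?case using finite_image_pointwise[of "Y i" S "\<lambda>x. \<Sum>i\<in>I. Y i x" "(+)"] by simp
qed

lemma finite_image_prod:
  fixes Z :: "nat \<Rightarrow> 'a \<Rightarrow> 'b::comm_monoid_mult"
  assumes "\<And>l. finite (Z l ` S)"
  shows "finite ((\<lambda>x. \<Prod>l<m. Z l x) ` S)"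
proof (induction m)
  case 0 then show ?case by (simp add: image_constant_conv)
next
  case (Suc m)
  then show ?case using finite_image_pointwise[OF Suc assms[of m], of "(*)"] by simp
qed

context prob_space
begin

lemma integrable_finite_image:
  fixes f :: "'a \<Rightarrow> real"
  assumes "f \<in> borel_measurable M" "finite (f ` space M)"
  shows "integrable M f"
proof -
  define B where "B = Max ((\<lambda>x. \<bar>x\<bar>) ` f ` space M)"
  have "\<forall>x\<in>space M. norm (f x) \<le> B"
    unfolding B_def using assms(2) by (auto intro!: Max_ge)
  then show ?thesis by (intro integrable_const_bound[where B=B]) (auto simp: assms)
qed

lemma integrable_indicator_events: "A \<in> sets M \<Longrightarrow> integrable M (indicator A :: 'a \<Rightarrow> real)"
  by (intro integrable_real_indicator) (auto simp: less_top[symmetric])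

lemma integral_mult_finite_image:
  fixes W G :: "'a \<Rightarrow> real"
  assumes W: "W \<in> borel_measurable M" "finite (W ` space M)" and G: "integrable M G"
  shows "(\<integral>\<omega>. G \<omega> * h (W \<omega>) \<partial>M) =
    (\<Sum>w\<in>W ` space M. h w * (\<integral>\<omega>. G \<omega> * indicator {\<omega>\<in>space M. W \<omega> = w} \<omega> \<partial>M))"
proof -
  have meas: "{\<omega>\<in>space M. W \<omega> = w} \<in> sets M" for w using W(1) by measurable
  have "(\<integral>\<omega>. G \<omega> * h (W \<omega>) \<partial>M) =
      (\<integral>\<omega>. (\<Sum>w\<in>W ` space M. h w * (G \<omega> * indicator {\<omega>\<in>space M. W \<omega> = w} \<omega>)) \<partial>M)"
  proof (rule Bochner_Integration.integral_cong)
    fix \<omega> assume \<omega>: "\<omega> \<in> space M"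
    have "(\<Sum>w\<in>W ` space M. h w * (G \<omega> * indicator {\<omega>\<in>space M. W \<omega> = w} \<omega>))
       = (\<Sum>w\<in>W ` space M. if w = W \<omega> then h w * G \<omega> else 0)"
      using \<omega> by (intro sum.cong) (auto simp: indicator_def)
    also have "\<dots> = h (W \<omega>) * G \<omega>" using \<omega> W(2) by (simp add: sum.delta')
    finally show "G \<omega> * h (W \<omega>) =
        (\<Sum>w\<in>W ` space M. h w * (G \<omega> * indicator {\<omega>\<in>space M. W \<omega> = w} \<omega>))"
      by simp
  qed simp
  also have "\<dots> = (\<Sum>w\<in>W ` space M. h w * (\<integral>\<omega>. G \<omega> * indicator {\<omega>\<in>space M. W \<omega> = w} \<omega> \<partial>M))"
    by (subst Bochner_Integration.integral_sum)
       (auto intro!: integrable_mult_right integrable_real_mult_indicator meas G)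
  finally show ?thesis .
qed

lemma integral_indicator_mult_finite_image:
  fixes W :: "'a \<Rightarrow> real"
  assumes W: "W \<in> borel_measurable M" "finite (W ` space M)" and A: "A \<in> sets M"
  shows "(\<integral>\<omega>. indicator A \<omega> * h (W \<omega>) \<partial>M) =
    (\<Sum>w\<in>W ` space M. h w * prob (A \<inter> {\<omega>\<in>space M. W \<omega> = w}))"
proof -
  have meas: "{\<omega>\<in>space M. W \<omega> = w} \<in> sets M" for w using W(1) by measurable
  show ?thesis
    using integral_mult_finite_image[OF W integrable_indicator_events[OF A], of h] A meas
    by (simp add: indicator_inter_arith[symmetric])
qed

lemma integral_finite_image:
  fixes W :: "'a \<Rightarrow> real"
  assumes "W \<in> borel_measurable M" "finite (W ` space M)"
  shows "(\<integral>\<omega>. W \<omega> \<partial>M) = (\<Sum>w\<in>W ` space M. w * prob {\<omega>\<in>space M. W \<omega> = w})"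
proof -
  have "(\<integral>\<omega>. W \<omega> \<partial>M) = (\<integral>\<omega>. indicator (space M) \<omega> * W \<omega> \<partial>M)"
    by (rule Bochner_Integration.integral_cong) auto
  then show ?thesis
    using integral_indicator_mult_finite_image[OF assms sets.top, of "\<lambda>w. w"]
    by (simp add: Int_absorb1 Collect_restrict)
qed

lemma prob_Int_preimage_eq_sum:
  fixes Z :: "'a \<Rightarrow> real"
  assumes C: "C \<in> sets M" and Z: "Z \<in> borel_measurable M" "finite (Z ` space M)"
  shows "prob (C \<inter> {\<omega>\<in>space M. Z \<omega> \<in> T}) =
    (\<Sum>z\<in>Z ` space M \<inter> T. prob (C \<inter> {\<omega>\<in>space M. Z \<omega> = z}))"
proof -
  have meas: "{\<omega>\<in>space M. Z \<omega> = z} \<in> sets M" for z using Z(1) by measurable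
  have "C \<inter> {\<omega>\<in>space M. Z \<omega> \<in> T} = (\<Union>z\<in>Z ` space M \<inter> T. C \<inter> {\<omega>\<in>space M. Z \<omega> = z})"
    by auto
  also have "prob \<dots> = (\<Sum>z\<in>Z ` space M \<inter> T. prob (C \<inter> {\<omega>\<in>space M. Z \<omega> = z}))"
    by (rule finite_measure_finite_Union) (use C Z(2) meas in \<open>auto simp: disjoint_family_on_def\<close>)
  finally show ?thesis .
qed

end

section \<open>The covariance inequality for phi-mixing sequences\<close>

lemma sum_mult_le_positive_part:
  fixes d :: "real \<Rightarrow> real"
  assumes "finite R" "(\<Sum>z\<in>R. d z) = 0" "\<And>z. z \<in> R \<Longrightarrow> lo \<le> z \<and> z \<le> hi"
  shows "(\<Sum>z\<in>R. z * d z) \<le> (hi - lo) * (\<Sum>z\<in>{z\<in>R. d z > 0}. d z)"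
proof -
  have "(\<Sum>z\<in>R. z * d z) = (\<Sum>z\<in>R. (z - lo) * d z)"
    using assms(2) by (simp add: algebra_simps sum_subtractf sum_distrib_left[symmetric])
  also have "\<dots> \<le> (\<Sum>z\<in>R. (hi - lo) * (if d z > 0 then d z else 0))"
  proof (rule sum_mono)
    fix z assume "z \<in> R"
    then have "lo \<le> z" "z \<le> hi" using assms(3) by auto
    then show "(z - lo) * d z \<le> (hi - lo) * (if d z > 0 then d z else 0)"
      by (cases "d z > 0") (auto intro: mult_right_mono mult_nonneg_nonpos)
  qed
  also have "\<dots> = (hi - lo) * (\<Sum>z\<in>{z\<in>R. d z > 0}. d z)"
    using assms(1) by (simp add: sum_distrib_left[symmetric] sum.inter_filter)
  finally show ?thesis .
qed

context rv_sequence
begin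

lemma integral_indicator_mult_le_phi_mix:
  assumes k: "k \<ge> 1" and A: "A \<in> gen_sigma M X {1..k}"
    and Z: "Z \<in> borel_measurable (gen_measure M X {k+g..})" "finite (Z ` space M)"
    and bnd: "\<And>\<omega>. \<omega> \<in> space M \<Longrightarrow> lo \<le> Z \<omega> \<and> Z \<omega> \<le> hi"
  shows "(\<integral>\<omega>. indicator A \<omega> * Z \<omega> \<partial>M) \<le> prob A * ((\<integral>\<omega>. Z \<omega> \<partial>M) + phi_mix M X g * (hi - lo))"
proof -
  (* The covariances d z of A with the level sets of Z sum to 0, so only their positive part counts,
     and that is the covariance of A with the single future event S where d (Z \<omega>) > 0. *)
  let ?R = "Z ` space M"
  define B where "B z = {\<omega>\<in>space M. Z \<omega> = z}" for z
  define d where "d z = prob (A \<inter> B z) - prob A * prob (B z)" for z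
  define S where "S = {\<omega>\<in>space M. Z \<omega> \<in> {z\<in>?R. d z > 0}}"
  have ZM: "Z \<in> borel_measurable M" using Z(1) k by (intro borel_measurable_gen_measure) auto
  have AM: "A \<in> sets M" using A gen_sigma_subset_sets[of "{1..k}"] by auto
  have "finite {z\<in>?R. d z > 0}" using Z(2) by simp
  then have S: "S \<in> gen_sigma M X {k+g..}"
    unfolding S_def by (intro gen_sigma_preimage[OF Z(1)] borel_closed finite_imp_closed)
  have SM: "S \<in> sets M" using S gen_sigma_subset_sets[of "{k+g..}"] k by auto
  have split: "prob (C \<inter> {\<omega>\<in>space M. Z \<omega> \<in> T}) = (\<Sum>z\<in>?R \<inter> T. prob (C \<inter> B z))"
    if "C \<in> sets M" for C T
    unfolding B_def by (rule prob_Int_preimage_eq_sum[OF that ZM Z(2)])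
  have int_ind: "(\<integral>\<omega>. indicator C \<omega> * Z \<omega> \<partial>M) = (\<Sum>z\<in>?R. z * prob (C \<inter> B z))"
    if "C \<in> sets M" for C
    using integral_indicator_mult_finite_image[OF ZM Z(2) that, of "\<lambda>z. z"] by (simp add: B_def)
  have int_Z: "(\<integral>\<omega>. Z \<omega> \<partial>M) = (\<Sum>z\<in>?R. z * prob (B z))"
    unfolding B_def by (rule integral_finite_image[OF ZM Z(2)])
  have prob_B: "prob (B z) = prob (space M \<inter> B z)" for z by (simp add: B_def Collect_restrict Int_absorb1)
  have "(\<integral>\<omega>. indicator A \<omega> * Z \<omega> \<partial>M) - prob A * (\<integral>\<omega>. Z \<omega> \<partial>M) = (\<Sum>z\<in>?R. z * d z)"
    unfolding int_ind[OF AM] int_Z d_def by (simp add: algebra_simps sum_subtractf sum_distrib_left)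
  also have "\<dots> \<le> (hi - lo) * (\<Sum>z\<in>{z\<in>?R. d z > 0}. d z)"
  proof (rule sum_mult_le_positive_part)
    have "prob A = (\<Sum>z\<in>?R. prob (A \<inter> B z))" "1 = (\<Sum>z\<in>?R. prob (B z))"
      using split[OF AM, of UNIV] split[of "space M" UNIV] unfolding prob_B
      by (simp_all add: sets.Int_space_eq2[OF AM] prob_space)
    then show "(\<Sum>z\<in>?R. d z) = 0"
      unfolding d_def by (simp add: sum_subtractf sum_distrib_left[symmetric])
  qed (use Z(2) bnd in auto)
  also have "(\<Sum>z\<in>{z\<in>?R. d z > 0}. d z) = prob (A \<inter> S) - prob A * prob S"
  proof -
    have "?R \<inter> {z\<in>?R. d z > 0} = {z\<in>?R. d z > 0}" by auto
    then have "prob (C \<inter> S) = (\<Sum>z\<in>{z\<in>?R. d z > 0}. prob (C \<inter> B z))" if "C \<in> sets M" for C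
      using split[OF that, of "{z\<in>?R. d z > 0}"] unfolding S_def by simp
    from this[OF AM] this[of "space M"] show ?thesis
      using SM unfolding d_def prob_B by (simp add: Int_absorb1 sum_subtractf sum_distrib_left)
  qed
  also have "(hi - lo) * (prob (A \<inter> S) - prob A * prob S) \<le> (hi - lo) * (phi_mix M X g * prob A)"
  proof (rule mult_left_mono)
    show "prob (A \<inter> S) - prob A * prob S \<le> phi_mix M X g * prob A"
      using abs_prob_Int_diff_le_phi_mix[OF k A S] by linarith
    obtain \<omega> where "\<omega> \<in> space M" using not_empty by blast
    then show "0 \<le> hi - lo" using bnd by force
  qed
  finally show ?thesis by (simp add: algebra_simps)
qed

lemma integral_mult_le_phi_mix:
  fixes W Z :: "'a \<Rightarrow> real"
  assumes k: "k \<ge> 1"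
    and W: "W \<in> borel_measurable (gen_measure M X {1..k})" "finite (W ` space M)"
      "\<And>\<omega>. \<omega> \<in> space M \<Longrightarrow> 0 \<le> W \<omega>"
    and Z: "Z \<in> borel_measurable (gen_measure M X {k+g..})" "finite (Z ` space M)"
    and bnd: "\<And>\<omega>. \<omega> \<in> space M \<Longrightarrow> lo \<le> Z \<omega> \<and> Z \<omega> \<le> hi"
  shows "(\<integral>\<omega>. W \<omega> * Z \<omega> \<partial>M) \<le> (\<integral>\<omega>. W \<omega> \<partial>M) * ((\<integral>\<omega>. Z \<omega> \<partial>M) + phi_mix M X g * (hi - lo))"
proof -
  let ?K = "(\<integral>\<omega>. Z \<omega> \<partial>M) + phi_mix M X g * (hi - lo)"
  define A where "A w = {\<omega>\<in>space M. W \<omega> = w}" for w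
  have WM: "W \<in> borel_measurable M" using W(1) by (intro borel_measurable_gen_measure) auto
  have ZM: "Z \<in> borel_measurable M" using Z(1) k by (intro borel_measurable_gen_measure) auto
  have A: "A w \<in> gen_sigma M X {1..k}" for w
    using gen_sigma_preimage[OF W(1), of "{w}"] unfolding A_def by simp
  have AM: "A w \<in> sets M" for w using A[of w] gen_sigma_subset_sets[of "{1..k}"] by auto
  have "(\<integral>\<omega>. W \<omega> * Z \<omega> \<partial>M) = (\<Sum>w\<in>W ` space M. w * (\<integral>\<omega>. indicator (A w) \<omega> * Z \<omega> \<partial>M))"
    using integral_mult_finite_image[OF WM W(2) integrable_finite_image[OF ZM Z(2)], of "\<lambda>w. w"]
    by (simp add: A_def mult.commute)
  also have "\<dots> \<le> (\<Sum>w\<in>W ` space M. w * (prob (A w) * ?K))"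
    using W(3) by (intro sum_mono mult_left_mono integral_indicator_mult_le_phi_mix[OF k A Z bnd]) auto
  also have "\<dots> = (\<Sum>w\<in>W ` space M. w * prob (A w)) * ?K"
    by (simp add: sum_distrib_right mult.assoc)
  also have "(\<Sum>w\<in>W ` space M. w * prob (A w)) = (\<integral>\<omega>. W \<omega> \<partial>M)"
    unfolding A_def by (rule integral_finite_image[OF WM W(2), symmetric])
  finally show ?thesis .
qed

lemma integral_prod_le_phi_mix:
  fixes Z :: "nat \<Rightarrow> 'a \<Rightarrow> real" and a b :: "nat \<Rightarrow> nat" and lo hi :: "nat \<Rightarrow> real"
  assumes ab: "\<And>l. 1 \<le> a l" "\<And>l. a l \<le> b l" "\<And>l. b l + g \<le> a (Suc l)"
    and Zm: "\<And>l. Z l \<in> borel_measurable (gen_measure M X {a l..b l})"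
    and Zf: "\<And>l. finite (Z l ` space M)"
    and Zb: "\<And>l \<omega>. \<omega> \<in> space M \<Longrightarrow> lo l \<le> Z l \<omega> \<and> Z l \<omega> \<le> hi l"
    and lo: "\<And>l. 0 \<le> lo l"
  shows "(\<integral>\<omega>. (\<Prod>l<m. Z l \<omega>) \<partial>M) \<le> (\<Prod>l<m. (\<integral>\<omega>. Z l \<omega> \<partial>M) + phi_mix M X g * (hi l - lo l))"
proof (induction m)
  case 0 then show ?case by (simp add: prob_space)
next
  case (Suc m)
  obtain \<omega>0 where \<omega>0: "\<omega>0 \<in> space M" using not_empty by blast
  have hilo: "lo l \<le> hi l" for l using Zb[OF \<omega>0, of l] by linarith
  have factor_nonneg: "0 \<le> (\<integral>\<omega>. Z l \<omega> \<partial>M) + phi_mix M X g * (hi l - lo l)" for l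
  proof -
    have "0 \<le> (\<integral>\<omega>. Z l \<omega> \<partial>M)" by (intro integral_nonneg_AE AE_I2) (meson order.trans lo Zb)
    then show ?thesis using hilo[of l] phi_mix_nonneg[of g] by simp
  qed
  show ?case
  proof (cases "m = 0")
    case True
    then show ?thesis using phi_mix_nonneg[of g] hilo[of 0] by simp
  next
    case False
    define k where "k = b (m - 1)"
    have k: "k \<ge> 1" unfolding k_def using ab(1)[of "m-1"] ab(2)[of "m-1"] by linarith
    have b_mono: "b l \<le> b l'" if "l \<le> l'" for l l'
      using lift_Suc_mono_le[of b, OF _ that] ab(2,3) by (meson add_leD1 order.trans)
    have W: "(\<lambda>\<omega>. \<Prod>l<m. Z l \<omega>) \<in> borel_measurable (gen_measure M X {1..k})"
    proof (rule borel_measurable_prod)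
      fix l assume "l \<in> {..<m}"
      then have "{a l..b l} \<subseteq> {1..k}" unfolding k_def using False ab(1)[of l] b_mono[of l "m - 1"] by auto
      then show "Z l \<in> borel_measurable (gen_measure M X {1..k})"
        by (rule measurable_gen_measure_mono[OF _ Zm])
    qed
    have Z: "Z m \<in> borel_measurable (gen_measure M X {k+g..})"
    proof -
      have "k + g \<le> a m" unfolding k_def using ab(3)[of "m-1"] False by (cases m) auto
      then show ?thesis by (intro measurable_gen_measure_mono[OF _ Zm]) auto
    qed
    have "(\<integral>\<omega>. (\<Prod>l<m. Z l \<omega>) * Z m \<omega> \<partial>M)
        \<le> (\<integral>\<omega>. (\<Prod>l<m. Z l \<omega>) \<partial>M) * ((\<integral>\<omega>. Z m \<omega> \<partial>M) + phi_mix M X g * (hi m - lo m))"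
      by (rule integral_mult_le_phi_mix[OF k W finite_image_prod[OF Zf] _ Z Zf[of m] Zb])
         (auto intro!: prod_nonneg intro: order.trans[OF lo Zb[THEN conjunct1]])
    also have "\<dots> \<le> (\<Prod>l<m. (\<integral>\<omega>. Z l \<omega> \<partial>M) + phi_mix M X g * (hi l - lo l))
        * ((\<integral>\<omega>. Z m \<omega> \<partial>M) + phi_mix M X g * (hi m - lo m))"
      by (rule mult_right_mono[OF Suc.IH factor_nonneg])
    finally show ?thesis by simp
  qed
qed

end

text \<open>The sign \<open>s\<close> (always \<open>1\<close> or \<open>-1\<close>) lets one statement cover upper and lower deviations.\<close>

definition centered_ind :: "(nat \<Rightarrow> 'a \<Rightarrow> real) \<Rightarrow> real \<Rightarrow> real \<Rightarrow> real \<Rightarrow> nat \<Rightarrow> 'a \<Rightarrow> real" where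
  "centered_ind X s x q i \<omega> = s * ((if X i \<omega> \<le> x then 1 else 0) - q)"

lemma finite_image_centered_ind: "finite (centered_ind X s x q i ` S)"
  by (rule finite_subset[of _ "{s * (1 - q), s * (0 - q)}"]) (auto simp: centered_ind_def)

lemma abs_centered_ind_le_1: "\<bar>s\<bar> = 1 \<Longrightarrow> 0 \<le> q \<Longrightarrow> q \<le> 1 \<Longrightarrow> \<bar>centered_ind X s x q i \<omega>\<bar> \<le> 1"
  by (auto simp: centered_ind_def abs_mult)

lemma abs_sum_centered_ind_le_card:
  assumes "\<bar>s\<bar> = 1" "0 \<le> q" "q \<le> 1"
  shows "\<bar>\<Sum>i\<in>I. centered_ind X s x q i \<omega>\<bar> \<le> card I"
proof -
  have "\<bar>\<Sum>i\<in>I. centered_ind X s x q i \<omega>\<bar> \<le> (\<Sum>i\<in>I. \<bar>centered_ind X s x q i \<omega>\<bar>)" by (rule sum_abs)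
  also have "\<dots> \<le> real (card I) * 1"
    by (rule sum_bounded_above) (rule abs_centered_ind_le_1[OF assms])
  finally show ?thesis by simp
qed

lemma finite_image_sum_centered_ind:
  "finite I \<Longrightarrow> finite ((\<lambda>\<omega>. \<Sum>i\<in>I. centered_ind X s x q i \<omega>) ` S)"
  by (intro finite_image_sum finite_image_centered_ind)

context rv_sequence
begin

definition le_event :: "real \<Rightarrow> nat \<Rightarrow> 'a set" where
  "le_event x i = {\<omega>\<in>space M. X i \<omega> \<le> x}"

lemma le_event_in_gen_sigma: "i \<in> I \<Longrightarrow> le_event x i \<in> gen_sigma M X I"
  unfolding le_event_def by (intro gen_sigma_preimage[of _ _ _ _ "{..x}", simplified] measurable_gen_measure)

lemma sets_le_event: "i \<ge> 1 \<Longrightarrow> le_event x i \<in> sets M"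
  using le_event_in_gen_sigma[of i "{i}" x] gen_sigma_subset_sets[of "{i}"] by auto

lemma measurable_centered_ind: "i \<in> I \<Longrightarrow> centered_ind X s x q i \<in> borel_measurable (gen_measure M X I)"
proof -
  assume "i \<in> I"
  then have [measurable]: "X i \<in> borel_measurable (gen_measure M X I)" by (rule measurable_gen_measure)
  show ?thesis unfolding centered_ind_def by measurable
qed

lemma borel_measurable_centered_ind: "i \<ge> 1 \<Longrightarrow> centered_ind X s x q i \<in> borel_measurable M"
  using measurable_centered_ind[of i "{i}"] by (intro borel_measurable_gen_measure[of "{i}"]) auto

lemma borel_measurable_sum_centered_ind:
  "I \<subseteq> {1..} \<Longrightarrow> (\<lambda>\<omega>. \<Sum>i\<in>I. centered_ind X s x q i \<omega>) \<in> borel_measurable M"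
  by (intro borel_measurable_sum borel_measurable_centered_ind) auto

lemma centered_ind_eq_indicator:
  "\<omega> \<in> space M \<Longrightarrow> centered_ind X s x q i \<omega> = s * (indicator (le_event x i) \<omega> - q)"
  by (simp add: centered_ind_def le_event_def indicator_def)

lemma integral_centered_ind:
  assumes "i \<ge> 1" "prob (le_event x i) = q"
  shows "(\<integral>\<omega>. centered_ind X s x q i \<omega> \<partial>M) = 0"
proof -
  have "(\<integral>\<omega>. centered_ind X s x q i \<omega> \<partial>M) = (\<integral>\<omega>. s * indicator (le_event x i) \<omega> - s * q \<partial>M)"
    by (rule Bochner_Integration.integral_cong) (auto simp: centered_ind_eq_indicator algebra_simps)
  also have "\<dots> = s * prob (le_event x i) - s * q"
    using sets_le_event[OF assms(1)] by (simp add: integrable_indicator_events prob_space)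
  finally show ?thesis using assms by simp
qed

lemma integral_centered_ind_mult:
  assumes "i \<ge> 1" "j \<ge> 1" "\<bar>s\<bar> = 1" "prob (le_event x i) = q" "prob (le_event x j) = q"
  shows "(\<integral>\<omega>. centered_ind X s x q i \<omega> * centered_ind X s x q j \<omega> \<partial>M) = prob (le_event x i \<inter> le_event x j) - q\<^sup>2"
proof -
  have ss: "s * s = 1" using assms(3) by (metis abs_mult_self_eq mult_1)
  have Ei: "le_event x i \<in> sets M" and Ej: "le_event x j \<in> sets M" using sets_le_event assms by auto
  have "(\<integral>\<omega>. centered_ind X s x q i \<omega> * centered_ind X s x q j \<omega> \<partial>M) =
     (\<integral>\<omega>. indicator (le_event x i \<inter> le_event x j) \<omega> - q * indicator (le_event x i) \<omega>
        - q * indicator (le_event x j) \<omega> + q\<^sup>2 \<partial>M)"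
  proof (rule Bochner_Integration.integral_cong)
    fix \<omega> assume "\<omega> \<in> space M"
    then have "centered_ind X s x q i \<omega> * centered_ind X s x q j \<omega>
        = (s * s) * ((indicator (le_event x i) \<omega> - q) * (indicator (le_event x j) \<omega> - q))"
      by (simp add: centered_ind_eq_indicator algebra_simps)
    then show "centered_ind X s x q i \<omega> * centered_ind X s x q j \<omega> =
        indicator (le_event x i \<inter> le_event x j) \<omega> - q * indicator (le_event x i) \<omega>
          - q * indicator (le_event x j) \<omega> + q\<^sup>2"
      unfolding ss by (simp add: indicator_def power2_eq_square algebra_simps)
  qed simp
  also have "\<dots> = prob (le_event x i \<inter> le_event x j) - q * prob (le_event x i) - q * prob (le_event x j) + q\<^sup>2"
    using Ei Ej by (simp add: integrable_indicator_events prob_space)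
  finally show ?thesis using assms by (simp add: power2_eq_square)
qed

lemma abs_integral_centered_ind_mult_le_phi_mix:
  assumes "1 \<le> i" "i < j" "\<bar>s\<bar> = 1" "prob (le_event x i) = q" "prob (le_event x j) = q"
  shows "\<bar>\<integral>\<omega>. centered_ind X s x q i \<omega> * centered_ind X s x q j \<omega> \<partial>M\<bar> \<le> phi_mix M X (j - i)"
proof -
  have A: "le_event x i \<in> gen_sigma M X {1..i}" using assms by (intro le_event_in_gen_sigma) auto
  have B: "le_event x j \<in> gen_sigma M X {i + (j - i)..}" using assms by (intro le_event_in_gen_sigma) auto
  have "\<bar>prob (le_event x i \<inter> le_event x j) - prob (le_event x i) * prob (le_event x j)\<bar>
      \<le> phi_mix M X (j - i) * prob (le_event x i)"
    by (rule abs_prob_Int_diff_le_phi_mix[OF assms(1) A B])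
  also have "\<dots> \<le> phi_mix M X (j - i)"
    using phi_mix_nonneg[of "j - i"] by (intro mult_left_le) auto
  finally show ?thesis using integral_centered_ind_mult[of i j s x q] assms by (simp add: power2_eq_square)
qed

lemma integral_centered_ind_square_le:
  assumes "1 \<le> i" "\<bar>s\<bar> = 1" "prob (le_event x i) = q"
  shows "(\<integral>\<omega>. centered_ind X s x q i \<omega> * centered_ind X s x q i \<omega> \<partial>M) \<le> 1/4"
proof -
  have "(\<integral>\<omega>. centered_ind X s x q i \<omega> * centered_ind X s x q i \<omega> \<partial>M) = q - q\<^sup>2"
    using integral_centered_ind_mult[of i i s x q] assms by simp
  also have "\<dots> \<le> 1/4" using zero_le_power2[of "q - 1/2"] by (simp add: power2_eq_square algebra_simps)
  finally show ?thesis .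
qed

end

section \<open>Exponential moments of sums\<close>

definition phi_root_sum :: "'a measure \<Rightarrow> (nat \<Rightarrow> 'a \<Rightarrow> real) \<Rightarrow> real" where
  "phi_root_sum M X = (\<Sum>n. sqrt (phi_mix M X (Suc n)))"

lemma exp_le_quadratic:
  fixes y :: real assumes "\<bar>y\<bar> \<le> 1" shows "exp y \<le> 1 + y + y\<^sup>2"
proof (cases "y \<ge> 0")
  case True then show ?thesis using assms by (intro exp_bound) auto
next
  case False
  define t where "t = - y"
  have t: "0 < t" "t \<le> 1" using False assms unfolding t_def by auto
  have pos: "0 < 1 - t + t\<^sup>2" using t mult_pos_pos[of t t] unfolding power2_eq_square by linarith
  have "1 \<le> (1 + t + t\<^sup>2 / 2) * (1 - t + t\<^sup>2)"
  proof -
    have "(1 + t + t\<^sup>2 / 2) * (1 - t + t\<^sup>2) = 1 + t\<^sup>2 / 2 + t^3 / 2 + t^4 / 2"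
      by (simp add: field_simps power2_eq_square power3_eq_cube power4_eq_xxxx)
    then show ?thesis using t by simp
  qed
  also have "\<dots> \<le> exp t * (1 - t + t\<^sup>2)"
    using exp_lower_Taylor_quadratic[of t] t pos by (intro mult_right_mono) auto
  finally have "exp (-t) \<le> 1 - t + t\<^sup>2" by (simp add: exp_minus field_simps)
  then show ?thesis unfolding t_def by simp
qed

lemma exp_diff_exp_minus_le:
  fixes a :: real assumes "0 \<le> a" "a \<le> 1" shows "exp a - exp (-a) \<le> 6 * a"
proof -
  have "exp a - exp (-a) = exp a * (1 - exp (-2 * a))"
    by (simp add: algebra_simps exp_add[symmetric])
  also have "\<dots> \<le> 3 * (2 * a)"
  proof (rule mult_mono)
    show "exp a \<le> 3" using exp_le assms by (meson exp_le_cancel_iff order.trans)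
    show "1 - exp (-2 * a) \<le> 2 * a" using exp_ge_add_one_self[of "-2*a"] by simp
  qed (use assms in simp_all)
  finally show ?thesis by simp
qed

context rv_sequence
begin

lemma phi_root_sum_nonneg: "summable (\<lambda>n. sqrt (phi_mix M X (Suc n))) \<Longrightarrow> 0 \<le> phi_root_sum M X"
  unfolding phi_root_sum_def using phi_mix_nonneg by (intro suminf_nonneg) auto

lemma sum_phi_mix_le_phi_root_sum:
  assumes sm: "summable (\<lambda>n. sqrt (phi_mix M X (Suc n)))" and J: "finite J"
    and h: "inj_on h J" and d: "\<And>j. j \<in> J \<Longrightarrow> d j = Suc (h j)"
  shows "(\<Sum>j\<in>J. phi_mix M X (d j)) \<le> phi_root_sum M X"
proof -
  have "phi_mix M X n \<le> sqrt (phi_mix M X n)" for n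
    using phi_mix_nonneg[of n] phi_mix_le_1[of n] by (intro real_le_rsqrt) (simp add: power2_eq_square mult_left_le)
  then have "(\<Sum>j\<in>J. phi_mix M X (d j)) \<le> (\<Sum>j\<in>J. sqrt (phi_mix M X (Suc (h j))))"
    using d by (intro sum_mono) simp
  also have "\<dots> = (\<Sum>k\<in>h ` J. sqrt (phi_mix M X (Suc k)))"
    using sum.reindex[OF h, of "\<lambda>k. sqrt (phi_mix M X (Suc k))"] by simp
  also have "\<dots> \<le> phi_root_sum M X"
    unfolding phi_root_sum_def using J phi_mix_nonneg by (intro sum_le_suminf[OF sm]) auto
  finally show ?thesis .
qed

lemma integrable_centered_ind_mult:
  "i \<ge> 1 \<Longrightarrow> j \<ge> 1 \<Longrightarrow> integrable M (\<lambda>\<omega>. centered_ind X s x q i \<omega> * centered_ind X s x q j \<omega>)"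
  by (intro integrable_finite_image finite_image_pointwise[OF finite_image_centered_ind finite_image_centered_ind]
      borel_measurable_times borel_measurable_centered_ind)

lemma integral_sum_centered_ind_square_le:
  assumes I: "finite I" "I \<subseteq> {1..}" and s: "\<bar>s\<bar> = 1"
    and hq: "\<And>i. i \<ge> 1 \<Longrightarrow> prob (le_event x i) = q"
    and sm: "summable (\<lambda>n. sqrt (phi_mix M X (Suc n)))"
  shows "(\<integral>\<omega>. (\<Sum>i\<in>I. centered_ind X s x q i \<omega>)\<^sup>2 \<partial>M) \<le> card I * (1/4 + 2 * phi_root_sum M X)"
proof -
  let ?Y = "centered_ind X s x q"
  define c where "c i j = (if j = i then 1/4 else 0) + (if i < j then phi_mix M X (j - i) else 0)
      + (if j < i then phi_mix M X (i - j) else 0)" for i j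
  have "(\<integral>\<omega>. (\<Sum>i\<in>I. ?Y i \<omega>)\<^sup>2 \<partial>M) = (\<integral>\<omega>. (\<Sum>i\<in>I. \<Sum>j\<in>I. ?Y i \<omega> * ?Y j \<omega>) \<partial>M)"
    by (simp add: power2_eq_square sum_product)
  also have "\<dots> = (\<Sum>i\<in>I. \<Sum>j\<in>I. (\<integral>\<omega>. ?Y i \<omega> * ?Y j \<omega> \<partial>M))"
    using I by (simp add: Bochner_Integration.integral_sum integrable_sum integrable_centered_ind_mult subset_iff)
  also have "\<dots> \<le> (\<Sum>i\<in>I. \<Sum>j\<in>I. c i j)"
  proof (intro sum_mono)
    fix i j assume "i \<in> I" "j \<in> I"
    then have i: "i \<ge> 1" and j: "j \<ge> 1" using I by auto
    consider "i = j" | "i < j" | "j < i" by linarith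
    then show "(\<integral>\<omega>. ?Y i \<omega> * ?Y j \<omega> \<partial>M) \<le> c i j"
    proof cases
      case 1 then show ?thesis using integral_centered_ind_square_le[OF i s hq[OF i]] by (simp add: c_def)
    next
      case 2 then show ?thesis
        using abs_integral_centered_ind_mult_le_phi_mix[OF i 2 s hq[OF i] hq[OF j]] by (simp add: c_def)
    next
      case 3 then show ?thesis
        using abs_integral_centered_ind_mult_le_phi_mix[OF j 3 s hq[OF j] hq[OF i]]
        by (simp add: c_def mult.commute)
    qed
  qed
  also have "\<dots> \<le> card I * (1/4 + 2 * phi_root_sum M X)"
  proof (rule sum_bounded_above)
    fix i assume "i \<in> I"
    have "(\<Sum>j\<in>I. c i j) = 1/4 + (\<Sum>j\<in>{j\<in>I. i < j}. phi_mix M X (j - i))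
        + (\<Sum>j\<in>{j\<in>I. j < i}. phi_mix M X (i - j))"
      using I \<open>i \<in> I\<close> unfolding c_def by (simp add: sum.distrib sum.delta sum.inter_filter)
    also have "\<dots> \<le> 1/4 + phi_root_sum M X + phi_root_sum M X"
    proof -
      have "(\<Sum>j\<in>{j\<in>I. i < j}. phi_mix M X (j - i)) \<le> phi_root_sum M X"
        by (rule sum_phi_mix_le_phi_root_sum[OF sm, of _ "\<lambda>j. j - i - 1"]) (use I in \<open>auto simp: inj_on_def\<close>)
      moreover have "(\<Sum>j\<in>{j\<in>I. j < i}. phi_mix M X (i - j)) \<le> phi_root_sum M X"
        by (rule sum_phi_mix_le_phi_root_sum[OF sm, of _ "\<lambda>j. i - j - 1"]) (use I in \<open>auto simp: inj_on_def\<close>)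
      ultimately show ?thesis by simp
    qed
    finally show "(\<Sum>j\<in>I. c i j) \<le> 1/4 + 2 * phi_root_sum M X" by simp
  qed
  finally show ?thesis .
qed

lemma integral_exp_sum_centered_ind_le:
  fixes lam :: real
  assumes I: "finite I" "I \<subseteq> {1..}" and s: "\<bar>s\<bar> = 1"
    and hq: "\<And>i. i \<ge> 1 \<Longrightarrow> prob (le_event x i) = q"
    and sm: "summable (\<lambda>n. sqrt (phi_mix M X (Suc n)))"
    and lam: "0 \<le> lam" "lam * card I \<le> 1"
  shows "(\<integral>\<omega>. exp (lam * (\<Sum>i\<in>I. centered_ind X s x q i \<omega>)) \<partial>M)
    \<le> 1 + lam\<^sup>2 * (card I * (1/4 + 2 * phi_root_sum M X))"
proof -
  define U where "U \<omega> = (\<Sum>i\<in>I. centered_ind X s x q i \<omega>)" for \<omega>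
  have q: "0 \<le> q" "q \<le> 1" using hq[of 1] by auto
  have UM: "U \<in> borel_measurable M" unfolding U_def using I by (intro borel_measurable_sum_centered_ind)
  have "finite (U ` space M)" unfolding U_def using I(1) by (rule finite_image_sum_centered_ind)
  then have int: "integrable M (\<lambda>\<omega>. h (U \<omega>))" if "h \<in> borel_measurable borel" for h :: "real \<Rightarrow> real"
    by (rule integrable_finite_image[OF measurable_compose[OF UM that] finite_image_comp[of U]])
  have EU: "(\<integral>\<omega>. U \<omega> \<partial>M) = 0"
    unfolding U_def using I
    by (subst Bochner_Integration.integral_sum)
       (auto intro!: sum.neutral integral_centered_ind hq integrable_finite_image
          borel_measurable_centered_ind finite_image_centered_ind)
  have "(\<integral>\<omega>. exp (lam * U \<omega>) \<partial>M) \<le> (\<integral>\<omega>. 1 + lam * U \<omega> + lam\<^sup>2 * (U \<omega>)\<^sup>2 \<partial>M)"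
  proof (rule integral_mono)
    show "integrable M (\<lambda>\<omega>. exp (lam * U \<omega>))"
      using int[of "\<lambda>u. exp (lam * u)"] by (simp add: borel_measurable_continuous_onI continuous_intros)
    show "integrable M (\<lambda>\<omega>. 1 + lam * U \<omega> + lam\<^sup>2 * (U \<omega>)\<^sup>2)"
      using int[of "\<lambda>u. 1 + lam * u + lam\<^sup>2 * u\<^sup>2"] by (simp add: borel_measurable_continuous_onI continuous_intros)
    fix \<omega>
    have "\<bar>U \<omega>\<bar> \<le> card I" unfolding U_def by (rule abs_sum_centered_ind_le_card[OF s q])
    then have "\<bar>lam * U \<omega>\<bar> \<le> 1" using lam by (simp add: abs_mult) (meson mult_left_mono order.trans)
    then have "exp (lam * U \<omega>) \<le> 1 + lam * U \<omega> + (lam * U \<omega>)\<^sup>2" by (rule exp_le_quadratic)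
    then show "exp (lam * U \<omega>) \<le> 1 + lam * U \<omega> + lam\<^sup>2 * (U \<omega>)\<^sup>2"
      by (simp add: power_mult_distrib)
  qed
  also have "\<dots> = 1 + lam * (\<integral>\<omega>. U \<omega> \<partial>M) + lam\<^sup>2 * (\<integral>\<omega>. (U \<omega>)\<^sup>2 \<partial>M)"
    using int[of "\<lambda>u. u"] int[of "\<lambda>u. u\<^sup>2"] by (simp add: prob_space)
  also have "\<dots> \<le> 1 + lam\<^sup>2 * (card I * (1/4 + 2 * phi_root_sum M X))"
  proof -
    have "(\<integral>\<omega>. (U \<omega>)\<^sup>2 \<partial>M) \<le> card I * (1/4 + 2 * phi_root_sum M X)"
      unfolding U_def by (rule integral_sum_centered_ind_square_le[OF I s hq sm])
    then show ?thesis unfolding EU by (simp add: mult_left_mono)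
  qed
  finally show ?thesis unfolding U_def .
qed


lemma integral_exp_sum_centered_ind_mixing_le:
  fixes lam :: real
  assumes I: "finite I" "I \<subseteq> {1..}" and s: "\<bar>s\<bar> = 1"
    and hq: "\<And>i. i \<ge> 1 \<Longrightarrow> prob (le_event x i) = q"
    and sm: "summable (\<lambda>n. sqrt (phi_mix M X (Suc n)))"
    and lam: "0 \<le> lam" "lam * card I \<le> 1"
  shows "(\<integral>\<omega>. exp (lam * (\<Sum>i\<in>I. centered_ind X s x q i \<omega>)) \<partial>M)
      + phi_mix M X g * (exp (lam * card I) - exp (- lam * card I))
    \<le> exp (card I * (lam\<^sup>2 * (1/4 + 2 * phi_root_sum M X) + 6 * lam * phi_mix M X g))"
proof -
  have "phi_mix M X g * (exp (lam * card I) - exp (- lam * card I)) \<le> phi_mix M X g * (6 * (lam * card I))"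
    using exp_diff_exp_minus_le[of "lam * card I"] lam phi_mix_nonneg[of g] by (intro mult_left_mono) auto
  then have "(\<integral>\<omega>. exp (lam * (\<Sum>i\<in>I. centered_ind X s x q i \<omega>)) \<partial>M)
      + phi_mix M X g * (exp (lam * card I) - exp (- lam * card I))
    \<le> 1 + card I * (lam\<^sup>2 * (1/4 + 2 * phi_root_sum M X) + 6 * lam * phi_mix M X g)"
    using integral_exp_sum_centered_ind_le[OF I s hq sm lam] by (simp add: algebra_simps)
  also have "\<dots> \<le> exp (card I * (lam\<^sup>2 * (1/4 + 2 * phi_root_sum M X) + 6 * lam * phi_mix M X g))"
    by (rule exp_ge_add_one_self)
  finally show ?thesis .
qed
end

section \<open>Blocking\<close>

text \<open>Block \<open>2 l + r\<close> of length \<open>g\<close> in \<open>{1..n}\<close>; for fixed parity \<open>r\<close> consecutive blocks are \<open>g\<close> apart.\<close>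

definition block :: "nat \<Rightarrow> nat \<Rightarrow> nat \<Rightarrow> nat \<Rightarrow> nat set" where
  "block n g r l = {i\<in>{1..n}. (i - 1) div g = 2 * l + r}"

lemma block_subset: "g \<ge> 1 \<Longrightarrow> block n g r l \<subseteq> {(2*l+r)*g+1 .. (2*l+r+1)*g}"
proof
  fix i assume g: "g \<ge> 1" and i: "i \<in> block n g r l"
  define j where "j = 2*l+r"
  have i1: "i \<ge> 1" and d: "(i - 1) div g = j" using i unfolding block_def j_def by auto
  have e: "i - 1 = j * g + (i - 1) mod g" by (metis d div_mult_mod_eq)
  have m: "(i - 1) mod g < g" using g by simp
  have "j * g + 1 \<le> i" using e i1 by linarith
  moreover have "i \<le> (j + 1) * g" using e m i1 by (simp add: algebra_simps)
  ultimately show "i \<in> {(2*l+r)*g+1 .. (2*l+r+1)*g}" unfolding j_def by simp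
qed

lemma finite_block[simp]: "finite (block n g r l)"
  unfolding block_def by simp

lemma block_subset_pos: "block n g r l \<subseteq> {1..}"
  unfolding block_def by auto

lemma card_block_le: "g \<ge> 1 \<Longrightarrow> card (block n g r l) \<le> g"
proof -
  assume g: "g \<ge> 1"
  have "card (block n g r l) \<le> card {(2*l+r)*g+1 .. (2*l+r+1)*g}"
    by (rule card_mono[OF _ block_subset[OF g]]) simp
  then show ?thesis by (simp add: algebra_simps)
qed

lemma sum_card_block_le: "(\<Sum>l<n. card (block n g r l)) \<le> n"
proof -
  have "(\<Sum>l<n. card (block n g r l)) = card (\<Union>l\<in>{..<n}. block n g r l)"
    by (rule card_UN_disjoint[symmetric]) (auto simp: block_def)
  also have "\<dots> \<le> card {1..n}" by (rule card_mono) (auto simp: block_def)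
  finally show ?thesis by simp
qed

lemma sum_eq_sum_even_odd_blocks:
  fixes f :: "nat \<Rightarrow> real"
  assumes g: "g \<ge> 1"
  shows "(\<Sum>i\<in>{1..n}. f i) = (\<Sum>l<n. \<Sum>i\<in>block n g 0 l. f i) + (\<Sum>l<n. \<Sum>i\<in>block n g 1 l. f i)"
proof -
  have "(\<lambda>i. (i - 1) div g) ` {1..n} \<subseteq> {..<2*n}"
  proof
    fix j assume "j \<in> (\<lambda>i. (i - 1) div g) ` {1..n}"
    then obtain i where i: "i \<in> {1..n}" "j = (i - 1) div g" by auto
    have "j \<le> i - 1" unfolding i(2) by (rule div_le_dividend)
    then show "j \<in> {..<2*n}" using i(1) by auto
  qed
  then have "(\<Sum>i\<in>{1..n}. f i) = (\<Sum>j<2*n. \<Sum>i\<in>{x\<in>{1..n}. (x - 1) div g = j}. f i)"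
    by (intro sum.group[symmetric]) auto
  also have "\<dots> = (\<Sum>l<n. \<Sum>i\<in>block n g 0 l. f i) + (\<Sum>l<n. \<Sum>i\<in>block n g 1 l. f i)"
  proof -
    have "(\<Sum>j<2*n. h j) = (\<Sum>l<n. h (2*l)) + (\<Sum>l<n. h (2*l+1))" for h :: "nat \<Rightarrow> real"
      by (induction n) (auto simp: algebra_simps)
    then show ?thesis unfolding block_def by simp
  qed
  finally show ?thesis .
qed

context rv_sequence
begin

lemma integral_exp_sum_blocks_le:
  fixes lam :: real
  assumes g: "g \<ge> 1" and lam: "0 < lam" "lam * g \<le> 1" and s: "\<bar>s\<bar> = 1"
    and hq: "\<And>i. i \<ge> 1 \<Longrightarrow> prob (le_event x i) = q"
    and sm: "summable (\<lambda>n. sqrt (phi_mix M X (Suc n)))"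
  shows "(\<integral>\<omega>. exp (lam * (\<Sum>l<n. \<Sum>i\<in>block n g r l. centered_ind X s x q i \<omega>)) \<partial>M)
     \<le> exp (n * (lam\<^sup>2 * (1/4 + 2 * phi_root_sum M X) + 6 * lam * phi_mix M X g))"
proof -
  define K where "K = lam\<^sup>2 * (1/4 + 2 * phi_root_sum M X) + 6 * lam * phi_mix M X g"
  define c where "c l = card (block n g r l)" for l
  define U where "U l \<omega> = (\<Sum>i\<in>block n g r l. centered_ind X s x q i \<omega>)" for l \<omega>
  define Z where "Z l \<omega> = exp (lam * U l \<omega>)" for l \<omega>
  have q: "0 \<le> q" "q \<le> 1" using hq[of 1] by auto
  have lam_c: "lam * c l \<le> 1" for l
    using card_block_le[OF g, of n r l] lam mult_left_mono[of "real (c l)" "real g" lam]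
    unfolding c_def by linarith
  have Z_bound: "exp (- lam * c l) \<le> Z l \<omega> \<and> Z l \<omega> \<le> exp (lam * c l)" for l \<omega>
  proof -
    have "\<bar>U l \<omega>\<bar> \<le> c l" unfolding U_def c_def by (rule abs_sum_centered_ind_le_card[OF s q])
    then have "\<bar>lam * U l \<omega>\<bar> \<le> lam * c l" using lam by (simp add: abs_mult mult_left_mono)
    then show ?thesis unfolding Z_def abs_le_iff by simp
  qed
  have "(\<integral>\<omega>. (\<Prod>l<n. Z l \<omega>) \<partial>M)
      \<le> (\<Prod>l<n. (\<integral>\<omega>. Z l \<omega> \<partial>M) + phi_mix M X g * (exp (lam * c l) - exp (- lam * c l)))"
  proof (rule integral_prod_le_phi_mix[of "\<lambda>l. (2*l+r)*g+1" "\<lambda>l. (2*l+r+1)*g"])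
    show "Z l \<in> borel_measurable (gen_measure M X {(2*l+r)*g+1..(2*l+r+1)*g})" for l
    proof -
      have [measurable]: "U l \<in> borel_measurable (gen_measure M X {(2*l+r)*g+1..(2*l+r+1)*g})"
        unfolding U_def using block_subset[OF g, of n r l]
        by (intro borel_measurable_sum measurable_centered_ind) auto
      show ?thesis unfolding Z_def by measurable
    qed
    show "finite (Z l ` space M)" for l
      unfolding Z_def U_def by (rule finite_image_comp[OF finite_image_sum_centered_ind[OF finite_block]])
  qed (use g Z_bound in \<open>auto simp: algebra_simps\<close>)
  also have "\<dots> \<le> (\<Prod>l<n. exp (c l * K))"
  proof (rule prod_mono)
    fix l
    have "(\<integral>\<omega>. Z l \<omega> \<partial>M) + phi_mix M X g * (exp (lam * c l) - exp (- lam * c l)) \<le> exp (c l * K)"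
      unfolding Z_def U_def c_def K_def
      by (rule integral_exp_sum_centered_ind_mixing_le)
         (use block_subset_pos s hq sm lam lam_c[of l] in \<open>auto simp: c_def\<close>)
    then show "0 \<le> (\<integral>\<omega>. Z l \<omega> \<partial>M) + phi_mix M X g * (exp (lam * c l) - exp (- lam * c l)) \<and>
        (\<integral>\<omega>. Z l \<omega> \<partial>M) + phi_mix M X g * (exp (lam * c l) - exp (- lam * c l)) \<le> exp (c l * K)"
      using lam phi_mix_nonneg[of g] by (auto simp: Z_def)
  qed
  also have "\<dots> = exp ((\<Sum>l<n. c l) * K)" by (simp add: exp_sum sum_distrib_right)
  also have "\<dots> \<le> exp (n * K)"
  proof -
    have "0 \<le> K" unfolding K_def using lam phi_root_sum_nonneg[OF sm] phi_mix_nonneg[of g] by auto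
    moreover have "real (\<Sum>l<n. c l) \<le> real n" unfolding c_def using sum_card_block_le[of n g r] by linarith
    ultimately show ?thesis by (simp add: mult_right_mono)
  qed
  finally show ?thesis
    by (simp add: K_def Z_def U_def sum_distrib_left exp_sum)
qed

lemma prob_sum_centered_ind_ge_le:
  fixes lam t :: real
  assumes g: "g \<ge> 1" and lam: "0 < lam" "lam * g \<le> 1" and s: "\<bar>s\<bar> = 1"
    and hq: "\<And>i. i \<ge> 1 \<Longrightarrow> prob (le_event x i) = q"
    and sm: "summable (\<lambda>n. sqrt (phi_mix M X (Suc n)))"
  shows "prob {\<omega>\<in>space M. t \<le> (\<Sum>i\<in>{1..n}. centered_ind X s x q i \<omega>)}
     \<le> 2 * exp (n * (lam\<^sup>2 * (1/4 + 2 * phi_root_sum M X) + 6 * lam * phi_mix M X g) - lam * t / 2)"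
proof -
  define K where "K = n * (lam\<^sup>2 * (1/4 + 2 * phi_root_sum M X) + 6 * lam * phi_mix M X g)"
  define S where "S r \<omega> = (\<Sum>l<n. \<Sum>i\<in>block n g r l. centered_ind X s x q i \<omega>)" for r \<omega>
  define A where "A r = {\<omega>\<in>space M. t / 2 \<le> S r \<omega>}" for r
  have SM[measurable]: "S r \<in> borel_measurable M" for r
    unfolding S_def by (intro borel_measurable_sum borel_measurable_centered_ind) (auto simp: block_def)
  have AM: "A r \<in> sets M" for r unfolding A_def by measurable
  have prob_A: "prob (A r) \<le> exp (K - lam * t / 2)" for r
  proof -
    have "A r = {\<omega>\<in>space M. exp (lam * t / 2) \<le> exp (lam * S r \<omega>)}"
      unfolding A_def using lam by (auto simp: field_simps)
    also have "prob \<dots> \<le> (\<integral>\<omega>. exp (lam * S r \<omega>) \<partial>M) / exp (lam * t / 2)"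
    proof (rule integral_Markov_inequality_measure[where A="space M"])
      have "finite (S r ` space M)"
        unfolding S_def by (rule finite_image_sum) (auto intro: finite_image_sum_centered_ind)
      from finite_image_comp[OF this] show "integrable M (\<lambda>\<omega>. exp (lam * S r \<omega>))"
        by (rule integrable_finite_image[rotated]) measurable
    qed auto
    also have "\<dots> \<le> exp K / exp (lam * t / 2)"
      unfolding S_def K_def by (intro divide_right_mono integral_exp_sum_blocks_le) (use assms in auto)
    finally show ?thesis by (simp add: exp_diff)
  qed
  have "{\<omega>\<in>space M. t \<le> (\<Sum>i\<in>{1..n}. centered_ind X s x q i \<omega>)} \<subseteq> A 0 \<union> A 1"
  proof
    fix \<omega> assume "\<omega> \<in> {\<omega>\<in>space M. t \<le> (\<Sum>i\<in>{1..n}. centered_ind X s x q i \<omega>)}"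
    then have "\<omega> \<in> space M" "t \<le> S 0 \<omega> + S 1 \<omega>"
      using sum_eq_sum_even_odd_blocks[OF g, of "\<lambda>i. centered_ind X s x q i \<omega>" n] unfolding S_def by auto
    then show "\<omega> \<in> A 0 \<union> A 1" unfolding A_def by auto
  qed
  then have "prob {\<omega>\<in>space M. t \<le> (\<Sum>i\<in>{1..n}. centered_ind X s x q i \<omega>)} \<le> prob (A 0 \<union> A 1)"
    using AM by (intro finite_measure_mono) auto
  also have "\<dots> \<le> prob (A 0) + prob (A 1)"
    using AM by (intro measure_subadditive) auto
  also have "\<dots> \<le> 2 * exp (K - lam * t / 2)" using prob_A[of 0] prob_A[of 1] by simp
  finally show ?thesis unfolding K_def .
qed

end

section \<open>Choice of the block length and of the Chernoff parameter\<close>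

context rv_sequence
begin

lemma phi_mix_le_phi_root_sum_square:
  assumes anti: "antimono (phi_mix M X)" and sm: "summable (\<lambda>n. sqrt (phi_mix M X (Suc n)))"
    and g: "g \<ge> 1"
  shows "phi_mix M X g \<le> (phi_root_sum M X)\<^sup>2 / (real g)\<^sup>2"
proof -
  have "real g * sqrt (phi_mix M X g) = (\<Sum>d<g. sqrt (phi_mix M X g))" by simp
  also have "\<dots> \<le> (\<Sum>d<g. sqrt (phi_mix M X (Suc d)))"
    using anti by (intro sum_mono) (auto simp: antimono_def)
  also have "\<dots> \<le> phi_root_sum M X"
    unfolding phi_root_sum_def by (rule sum_le_suminf[OF sm]) (use phi_mix_nonneg in auto)
  finally have "(real g * sqrt (phi_mix M X g))\<^sup>2 \<le> (phi_root_sum M X)\<^sup>2"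
    using phi_mix_nonneg[of g] by (intro power_mono) auto
  then show ?thesis using g phi_mix_nonneg[of g] by (simp add: power_mult_distrib field_simps)
qed

lemma eventually_block_parameters:
  fixes \<theta> :: real and lam :: "nat \<Rightarrow> real" and g :: "nat \<Rightarrow> nat"
  assumes anti: "antimono (phi_mix M X)" and sm: "summable (\<lambda>n. sqrt (phi_mix M X (Suc n)))"
    and \<theta>: "0 < \<theta>"
    and lam_def: "\<And>n. lam n = \<theta> * sqrt (ln (real n)) / sqrt (real n)"
    and g_def: "\<And>n. g n = nat \<lceil>real n powr (1/3)\<rceil>"
  shows "eventually (\<lambda>n. 1 \<le> g n \<and> lam n * g n \<le> 1 \<and> 6 * real n * lam n * phi_mix M X (g n) \<le> 1)
    sequentially"
proof -
  define c where "c = 6 * \<theta> * ((phi_root_sum M X)\<^sup>2 + 1)"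
  have "((\<lambda>n::nat. sqrt (ln (real n)) / sqrt (real n) * (real n powr (1/3) + 1)) \<longlongrightarrow> 0) sequentially"
    by real_asymp
  from order_tendstoD(2)[OF tendsto_mult_right_zero[OF this, of \<theta>]]
  have small_lam: "eventually (\<lambda>n. \<theta> * (sqrt (ln (real n)) / sqrt (real n) * (real n powr (1/3) + 1)) < 1)
      sequentially" by (simp add: mult.commute)
  have "((\<lambda>n::nat. sqrt (real n) * sqrt (ln (real n)) / real n powr (2/3)) \<longlongrightarrow> 0) sequentially"
    by real_asymp
  from order_tendstoD(2)[OF tendsto_mult_right_zero[OF this, of c]]
  have small_err: "eventually (\<lambda>n. c * (sqrt (real n) * sqrt (ln (real n)) / real n powr (2/3)) < 1)
      sequentially" by (simp add: mult.commute)
  show ?thesis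
    using small_lam small_err eventually_ge_at_top[of 2]
  proof eventually_elim
    case (elim n)
    have np: "0 < real n powr (1/3)" using elim by simp
    have g_lo: "real n powr (1/3) \<le> g n" unfolding g_def by linarith
    have g_hi: "g n \<le> real n powr (1/3) + 1"
      unfolding g_def using np of_int_ceiling_le_add_one[of "real n powr (1/3)"] by simp
    have g1: "1 \<le> g n" using g_lo np by linarith
    have lam0: "0 < lam n" unfolding lam_def using \<theta> elim by simp
    have "lam n * g n \<le> lam n * (real n powr (1/3) + 1)" using lam0 g_hi by (intro mult_left_mono) auto
    then have lam_g: "lam n * g n \<le> 1" using elim(1) unfolding lam_def by simp
    have "phi_mix M X (g n) \<le> (phi_root_sum M X)\<^sup>2 / (real (g n))\<^sup>2"
      using phi_mix_le_phi_root_sum_square[OF anti sm] g1 by simp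
    also have "\<dots> \<le> ((phi_root_sum M X)\<^sup>2 + 1) / (real n powr (1/3))\<^sup>2"
      using g_lo np by (intro frac_le power_mono) auto
    also have "(real n powr (1/3))\<^sup>2 = real n powr (2/3)"
      by (simp add: powr_powr[symmetric] power2_eq_square powr_add[symmetric])
    finally have "6 * real n * lam n * phi_mix M X (g n)
        \<le> 6 * real n * lam n * (((phi_root_sum M X)\<^sup>2 + 1) / real n powr (2/3))"
      using lam0 by (intro mult_left_mono) auto
    also have "\<dots> = c * (sqrt (real n) * sqrt (ln (real n)) / real n powr (2/3))"
    proof -
      have sq: "sqrt (real n) * (sqrt (real n) * z) = real n * z" for z by (simp add: mult.assoc[symmetric])
      show ?thesis unfolding lam_def c_def using elim by (simp add: field_simps sq)
    qed
    finally show ?case using g1 lam_g elim(2) by linarith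
  qed
qed

lemma chernoff_exponent_le:
  fixes n v C \<phi> lam :: real
  assumes n: "1 < n" and v: "0 < v" and C: "32 * v \<le> C\<^sup>2"
    and lam: "lam = C / (4 * v) * sqrt (ln n) / sqrt n" and err: "6 * n * lam * \<phi> \<le> 1"
  shows "n * (lam\<^sup>2 * v + 6 * lam * \<phi>) - lam * (C * sqrt n * sqrt (ln n)) / 2 \<le> 1 - 2 * ln n"
proof -
  have L: "0 < ln n" using n by simp
  have "n * lam\<^sup>2 * v = C\<^sup>2 / (16 * v) * ln n"
    unfolding lam using n L v by (simp add: field_simps power2_eq_square)
  moreover have "lam * (C * sqrt n * sqrt (ln n)) / 2 = C\<^sup>2 / (8 * v) * ln n"
    unfolding lam using n L v by (simp add: field_simps power2_eq_square)
  moreover have "2 * ln n \<le> C\<^sup>2 / (16 * v) * ln n"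
    using C v L by (intro mult_right_mono) (auto simp: field_simps)
  ultimately show ?thesis using err by (simp add: algebra_simps)
qed

lemma summable_prob_sum_centered_ind_ge:
  fixes C :: real and xs qs :: "nat \<Rightarrow> real"
  assumes anti: "antimono (phi_mix M X)" and sm: "summable (\<lambda>n. sqrt (phi_mix M X (Suc n)))"
    and s: "\<bar>s\<bar> = 1" and hq: "\<And>n i. i \<ge> 1 \<Longrightarrow> prob (le_event (xs n) i) = qs n"
    and C: "0 < C" "32 * (1/4 + 2 * phi_root_sum M X) \<le> C\<^sup>2"
  shows "summable (\<lambda>n. prob {\<omega>\<in>space M. C * sqrt (real n) * sqrt (ln (real n))
      \<le> (\<Sum>i\<in>{1..n}. centered_ind X s (xs n) (qs n) i \<omega>)})"
proof (rule summable_comparison_test_ev)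
  define v where "v = 1/4 + 2 * phi_root_sum M X"
  define lam where "lam n = C / (4 * v) * sqrt (ln (real n)) / sqrt (real n)" for n :: nat
  define g where "g n = nat \<lceil>real n powr (1/3)\<rceil>" for n :: nat
  have v: "0 < v" unfolding v_def using phi_root_sum_nonneg[OF sm] by simp
  then have \<theta>: "0 < C / (4 * v)" using C by simp
  show "summable (\<lambda>n. 2 * exp 1 * inverse (real n ^ 2))"
    by (intro summable_mult inverse_power_summable) auto
  show "eventually (\<lambda>n. norm (prob {\<omega>\<in>space M. C * sqrt (real n) * sqrt (ln (real n))
      \<le> (\<Sum>i\<in>{1..n}. centered_ind X s (xs n) (qs n) i \<omega>)}) \<le> 2 * exp 1 * inverse (real n ^ 2)) sequentially"
    using eventually_block_parameters[OF anti sm \<theta> lam_def g_def] eventually_ge_at_top[of 2]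
  proof eventually_elim
    case (elim n)
    have "prob {\<omega>\<in>space M. C * sqrt (real n) * sqrt (ln (real n))
        \<le> (\<Sum>i\<in>{1..n}. centered_ind X s (xs n) (qs n) i \<omega>)}
      \<le> 2 * exp (n * ((lam n)\<^sup>2 * v + 6 * lam n * phi_mix M X (g n))
          - lam n * (C * sqrt (real n) * sqrt (ln (real n))) / 2)"
      unfolding v_def using elim C v by (intro prob_sum_centered_ind_ge_le s hq sm) (auto simp: lam_def)
    also have "\<dots> \<le> 2 * exp (1 - 2 * ln (real n))"
    proof -
      have "real n * ((lam n)\<^sup>2 * v + 6 * lam n * phi_mix M X (g n))
          - lam n * (C * sqrt (real n) * sqrt (ln (real n))) / 2 \<le> 1 - 2 * ln (real n)"
        by (rule chernoff_exponent_le[OF _ v _ lam_def]) (use elim C in \<open>auto simp: v_def\<close>)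
      then show ?thesis by simp
    qed
    also have "exp (1 - 2 * ln (real n)) = exp 1 * inverse (real n ^ 2)"
    proof -
      have "exp (2 * ln (real n)) = real n ^ 2"
        using elim ln_realpow[of "real n" 2] exp_ln[of "real n ^ 2"] by simp
      then show ?thesis by (simp add: exp_diff divide_inverse)
    qed
    finally show ?case by simp
  qed
qed

end

section \<open>Empirical quantiles\<close>

lemma emp_df_mono: "x \<le> y \<Longrightarrow> emp_df X n \<omega> x \<le> emp_df X n \<omega> y"
  unfolding emp_df_def by (intro mult_left_mono sum_mono) auto

lemma bdd_below_emp_df_ge:
  assumes "n \<ge> 1" "0 < p"
  shows "bdd_below {x. p \<le> emp_df X n \<omega> x}"
proof (rule bdd_belowI)
  fix x assume x: "x \<in> {x. p \<le> emp_df X n \<omega> x}"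
  show "Min ((\<lambda>i. X i \<omega>) ` {1..n}) \<le> x"
  proof (rule ccontr)
    assume "\<not> Min ((\<lambda>i. X i \<omega>) ` {1..n}) \<le> x"
    then have "\<forall>i\<in>{1..n}. \<not> X i \<omega> \<le> x" by (auto simp: Min_le_iff)
    then have "emp_df X n \<omega> x = 0" unfolding emp_df_def by simp
    then show False using x assms by simp
  qed
qed

lemma emp_df_ge_if_quantile_less:
  assumes n: "n \<ge> 1" and p: "0 < p" "p \<le> 1" and y: "quantile (emp_df X n \<omega>) p < y"
  shows "p \<le> emp_df X n \<omega> y"
proof -
  let ?m = "Max ((\<lambda>i. X i \<omega>) ` {1..n})"
  have "emp_df X n \<omega> ?m = 1" unfolding emp_df_def using n by simp
  then have ne: "{x. p \<le> emp_df X n \<omega> x} \<noteq> {}" using p by (metis mem_Collect_eq empty_iff)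
  obtain z where "p \<le> emp_df X n \<omega> z" "z < y"
    using y unfolding quantile_def cInf_less_iff[OF ne bdd_below_emp_df_ge[OF n p(1)]] by auto
  then show ?thesis using emp_df_mono[of z y X n \<omega>] by linarith
qed

lemma emp_df_less_if_quantile_greater:
  assumes "n \<ge> 1" "0 < p" "y < quantile (emp_df X n \<omega>) p"
  shows "emp_df X n \<omega> y < p"
proof (rule ccontr)
  assume "\<not> emp_df X n \<omega> y < p"
  then have "quantile (emp_df X n \<omega>) p \<le> y"
    unfolding quantile_def using bdd_below_emp_df_ge[OF assms(1,2)] by (intro cInf_lower) auto
  then show False using assms(3) by simp
qed

lemma sum_centered_ind_eq_emp_df:
  "n \<ge> 1 \<Longrightarrow> (\<Sum>i\<in>{1..n}. centered_ind X s x q i \<omega>) = s * real n * (emp_df X n \<omega> x - q)"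
  unfolding centered_ind_def emp_df_def by (simp add: sum_distrib_left[symmetric] sum_subtractf algebra_simps)

lemma abs_emp_quantile_diff_le:
  assumes n: "n \<ge> 1" and p: "0 < p" "p \<le> 1"
    and up: "t \<le> real n * (q\<^sub>u - p)" "(\<Sum>i\<in>{1..n}. centered_ind X (-1) (\<xi> + \<epsilon>) q\<^sub>u i \<omega>) < t"
    and lo: "t \<le> real n * (p - q\<^sub>l)" "(\<Sum>i\<in>{1..n}. centered_ind X 1 (\<xi> - \<epsilon>) q\<^sub>l i \<omega>) < t"
  shows "\<bar>quantile (emp_df X n \<omega>) p - \<xi>\<bar> \<le> \<epsilon>"
proof -
  have "\<not> \<xi> + \<epsilon> < quantile (emp_df X n \<omega>) p"
  proof
    assume "\<xi> + \<epsilon> < quantile (emp_df X n \<omega>) p"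
    then have "emp_df X n \<omega> (\<xi> + \<epsilon>) < p" by (rule emp_df_less_if_quantile_greater[OF n p(1)])
    then have "real n * emp_df X n \<omega> (\<xi> + \<epsilon>) \<le> real n * p" by (auto intro!: mult_left_mono)
    moreover have "(\<Sum>i\<in>{1..n}. centered_ind X (-1) (\<xi> + \<epsilon>) q\<^sub>u i \<omega>)
        = real n * q\<^sub>u - real n * emp_df X n \<omega> (\<xi> + \<epsilon>)"
      using sum_centered_ind_eq_emp_df[OF n, of X "-1" "\<xi> + \<epsilon>" "q\<^sub>u" \<omega>] by (simp add: algebra_simps)
    ultimately show False using up by (simp add: algebra_simps)
  qed
  moreover have "\<not> quantile (emp_df X n \<omega>) p < \<xi> - \<epsilon>"
  proof
    assume "quantile (emp_df X n \<omega>) p < \<xi> - \<epsilon>"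
    then have "p \<le> emp_df X n \<omega> (\<xi> - \<epsilon>)" by (rule emp_df_ge_if_quantile_less[OF n p])
    then have "real n * p \<le> real n * emp_df X n \<omega> (\<xi> - \<epsilon>)" by (auto intro!: mult_left_mono)
    moreover have "(\<Sum>i\<in>{1..n}. centered_ind X 1 (\<xi> - \<epsilon>) q\<^sub>l i \<omega>)
        = real n * emp_df X n \<omega> (\<xi> - \<epsilon>) - real n * q\<^sub>l"
      using sum_centered_ind_eq_emp_df[OF n, of X 1 "\<xi> - \<epsilon>" "q\<^sub>l" \<omega>] by (simp add: algebra_simps)
    ultimately show False using lo by (simp add: algebra_simps)
  qed
  ultimately show ?thesis by linarith
qed

context rv_sequence
begin

lemma AE_eventually_abs_emp_quantile_diff_le:
  fixes F :: "real \<Rightarrow> real" and \<epsilon> :: "nat \<Rightarrow> real" and C p \<xi> :: real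
  assumes anti: "antimono (phi_mix M X)" and sm: "summable (\<lambda>n. sqrt (phi_mix M X (Suc n)))"
    and hF: "\<And>i x. i \<ge> 1 \<Longrightarrow> prob (le_event x i) = F x"
    and p: "0 < p" "p \<le> 1" and C: "0 < C" "32 * (1/4 + 2 * phi_root_sum M X) \<le> C\<^sup>2"
    and gap: "eventually (\<lambda>n. C * sqrt (real n) * sqrt (ln (real n)) \<le> real n * (F (\<xi> + \<epsilon> n) - p)
        \<and> C * sqrt (real n) * sqrt (ln (real n)) \<le> real n * (p - F (\<xi> - \<epsilon> n))) sequentially"
  shows "AE \<omega> in M. eventually (\<lambda>n. \<bar>quantile (emp_df X n \<omega>) p - \<xi>\<bar> \<le> \<epsilon> n) sequentially"
proof -
  define dev where "dev s x n = {\<omega>\<in>space M. C * sqrt (real n) * sqrt (ln (real n))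
      \<le> (\<Sum>i\<in>{1..n}. centered_ind X s (x n) (F (x n)) i \<omega>)}" for s and x :: "nat \<Rightarrow> real" and n
  have rare: "AE \<omega> in M. eventually (\<lambda>n. \<omega> \<in> space M - dev s x n) sequentially" if "\<bar>s\<bar> = 1" for s x
  proof (rule borel_cantelli_AE1)
    show "dev s x n \<in> sets M" for n
      using borel_measurable_sum_centered_ind[of "{1..n}" s "x n" "F (x n)"] unfolding dev_def by measurable
    show "summable (\<lambda>n. measure M (dev s x n))"
      unfolding dev_def by (rule summable_prob_sum_centered_ind_ge[OF anti sm that _ C]) (rule hF)
  qed (auto simp: less_top[symmetric])
  have "AE \<omega> in M. eventually (\<lambda>n. \<omega> \<in> space M - dev (-1) (\<lambda>n. \<xi> + \<epsilon> n) n) sequentially"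
    "AE \<omega> in M. eventually (\<lambda>n. \<omega> \<in> space M - dev 1 (\<lambda>n. \<xi> - \<epsilon> n) n) sequentially"
    by (rule rare; simp)+
  then show ?thesis
  proof eventually_elim
    case (elim \<omega>)
    from elim(1,2) gap eventually_ge_at_top[of 1] show ?case
    proof eventually_elim
      case (elim n)
      then show ?case by (intro abs_emp_quantile_diff_le[OF _ p]) (auto simp: dev_def)
    qed
  qed
qed

end

lemma (in prob_space) cdf_properties:
  fixes Y :: "'a \<Rightarrow> real"
  assumes Y: "Y \<in> borel_measurable M" and F: "\<And>x. prob {\<omega>\<in>space M. Y \<omega> \<le> x} = F x"
  shows "mono F" "(F \<longlongrightarrow> 1) at_top" "(F \<longlongrightarrow> 0) at_bot"
proof -
  have D: "real_distribution (distr M borel Y)" using Y by simp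
  have "cdf (distr M borel Y) = F"
  proof
    fix x
    have "Y -` {..x} \<inter> space M = {\<omega>\<in>space M. Y \<omega> \<le> x}" by auto
    then show "cdf (distr M borel Y) x = F x" using Y F by (simp add: cdf_def measure_distr)
  qed
  then show "mono F" "(F \<longlongrightarrow> 1) at_top" "(F \<longlongrightarrow> 0) at_bot"
    using real_distribution.cdf_lim_at_top_prob[OF D]
      finite_borel_measure.cdf_lim_at_bot[OF real_distribution.finite_borel_measure_M[OF D]]
      finite_borel_measure.cdf_nondecreasing[OF real_distribution.finite_borel_measure_M[OF D]]
    by (auto intro: monoI)
qed

lemma cdf_quantile_eq:
  fixes F :: "real \<Rightarrow> real"
  assumes mono: "mono F" and lim: "(F \<longlongrightarrow> 1) at_top" "(F \<longlongrightarrow> 0) at_bot"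
    and p: "0 < p" "p < 1" and cont: "isCont F (quantile F p)"
  shows "F (quantile F p) = p"
proof -
  define S where "S = {x. p \<le> F x}"
  define \<xi> where "\<xi> = quantile F p"
  have \<xi>: "\<xi> = Inf S" unfolding \<xi>_def quantile_def S_def ..
  from order_tendstoD(1)[OF lim(1) p(2)] obtain x0 where "\<forall>x\<ge>x0. p < F x"
    by (auto simp: eventually_at_top_linorder)
  then have "x0 \<in> S" unfolding S_def by auto
  then have ne: "S \<noteq> {}" by blast
  from order_tendstoD(2)[OF lim(2) p(1)] obtain y0 where y0: "\<forall>x\<le>y0. F x < p"
    by (auto simp: eventually_at_bot_linorder)
  have "y0 \<le> x" if "x \<in> S" for x
  proof (rule ccontr)
    assume "\<not> y0 \<le> x"
    then have "F x < p" using y0 by simp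
    then show False using that unfolding S_def by simp
  qed
  then have bdd: "bdd_below S" by (rule bdd_belowI)
  have right: "\<forall>\<^sub>F x in at_right \<xi>. p \<le> F x"
    using eventually_at_right_less
  proof eventually_elim
    case (elim x)
    then obtain s where "s \<in> S" "s < x" using cInf_less_iff[OF ne bdd] unfolding \<xi> by auto
    then show ?case using monoD[OF mono, of s x] unfolding S_def by simp
  qed
  have "\<forall>\<^sub>F x in at_left \<xi>. x < \<xi>"
    unfolding eventually_at_left_field by (intro exI[of _ "\<xi> - 1"]) auto
  then have left: "\<forall>\<^sub>F x in at_left \<xi>. F x \<le> p"
  proof eventually_elim
    case (elim x)
    have "x \<notin> S"
    proof
      assume "x \<in> S"
      then have "\<xi> \<le> x" unfolding \<xi> using bdd by (rule cInf_lower)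
      then show False using elim by simp
    qed
    then show ?case unfolding S_def by simp
  qed
  have "(F \<longlongrightarrow> F \<xi>) (at \<xi>)" using cont unfolding \<xi>_def isCont_def .
  then have "(F \<longlongrightarrow> F \<xi>) (at_right \<xi>)" "(F \<longlongrightarrow> F \<xi>) (at_left \<xi>)"
    by (simp_all add: filterlim_at_split)
  then have "p \<le> F \<xi>" "F \<xi> \<le> p"
    using tendsto_lowerbound[OF _ right] tendsto_upperbound[OF _ left] by simp_all
  then show ?thesis unfolding \<xi>_def by simp
qed

lemma has_real_derivative_secant_bounds:
  assumes "(F has_real_derivative D) (at x)" "c < D"
  obtains d where "d > 0" "\<And>h. 0 < h \<Longrightarrow> h < d \<Longrightarrow> F x + c * h < F (x + h) \<and> F (x - h) < F x - c * h"
proof -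
  have "((\<lambda>h. (F (x + h) - F x) / h) \<midarrow>0\<rightarrow> D)" using assms(1) by (simp add: DERIV_def)
  from LIM_D[OF this, of "D - c"] assms(2) obtain d where d: "d > 0"
    and slope: "\<And>h. h \<noteq> 0 \<Longrightarrow> \<bar>h\<bar> < d \<Longrightarrow> c < (F (x + h) - F x) / h"
    by (auto simp: abs_less_iff)
  have "F x + c * h < F (x + h) \<and> F (x - h) < F x - c * h" if "0 < h" "h < d" for h
    using slope[of h] slope[of "-h"] that by (simp add: field_simps)
  with d that show ?thesis by blast
qed

text \<open>The rate \<open>\<epsilon> n\<close> is chosen so that \<open>n c \<epsilon> n = C sqrt (n log n)\<close> for the slope
  \<open>c = f0 C / (C + \<delta>) < f0\<close>.\<close>

lemma eventually_cdf_gap: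
  fixes F :: "real \<Rightarrow> real"
  assumes deriv: "(F has_real_derivative f0) (at \<xi>)" and f0: "0 < f0" and C: "0 < C" and \<delta>: "0 < \<delta>"
  defines "\<epsilon> \<equiv> \<lambda>n::nat. (C + \<delta>) * sqrt (ln (real n)) / (f0 * sqrt (real n))"
  shows "eventually (\<lambda>n. C * sqrt (real n) * sqrt (ln (real n)) \<le> real n * (F (\<xi> + \<epsilon> n) - F \<xi>)
      \<and> C * sqrt (real n) * sqrt (ln (real n)) \<le> real n * (F \<xi> - F (\<xi> - \<epsilon> n))) sequentially"
proof -
  define c where "c = f0 * C / (C + \<delta>)"
  have "c < f0" unfolding c_def using f0 C \<delta> by (simp add: field_simps)
  then obtain d where d: "d > 0"
    and secant: "\<And>h. 0 < h \<Longrightarrow> h < d \<Longrightarrow> F \<xi> + c * h < F (\<xi> + h) \<and> F (\<xi> - h) < F \<xi> - c * h"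
    using has_real_derivative_secant_bounds[OF deriv] by blast
  have "((\<lambda>n::nat. sqrt (ln (real n)) / sqrt (real n)) \<longlongrightarrow> 0) sequentially" by real_asymp
  from tendsto_mult_left_zero[OF this, of "(C + \<delta>) / f0"]
  have "(\<epsilon> \<longlongrightarrow> 0) sequentially" unfolding \<epsilon>_def by (simp add: field_simps)
  from order_tendstoD(2)[OF this d] eventually_ge_at_top[of 2] show ?thesis
  proof eventually_elim
    case (elim n)
    then have \<epsilon>: "0 < \<epsilon> n" "\<epsilon> n < d" unfolding \<epsilon>_def using C \<delta> f0 by auto
    have "real n * (c * \<epsilon> n) = C * sqrt (real n) * sqrt (ln (real n))"
    proof -
      define R where "R = sqrt (real n)"
      have n: "real n = R * R" and R: "0 < R" unfolding R_def using elim by simp_all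
      have "f0 * (C + \<delta>) \<noteq> 0" using C \<delta> f0 by simp
      have "c * \<epsilon> n = (f0 * (C + \<delta>) * (C * sqrt (ln (real n)))) / (f0 * (C + \<delta>) * R)"
        unfolding c_def \<epsilon>_def R_def[symmetric] by (simp add: times_divide_times_eq ac_simps)
      also have "\<dots> = C * sqrt (ln (real n)) / R" using \<open>f0 * (C + \<delta>) \<noteq> 0\<close> by simp
      finally show ?thesis unfolding R_def[symmetric] n using R by (simp add: field_simps)
    qed
    with secant[OF \<epsilon>] elim show ?case
      by (smt (verit, best) mult_left_mono of_nat_0_le_iff)
  qed
qed

theorem lemma3p3:
  fixes M :: "'a measure" and X :: "nat \<Rightarrow> 'a \<Rightarrow> real"
    and F f f' :: "real \<Rightarrow> real" and p :: real
  assumes "prob_space M"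
    and "\<And>i. i \<ge> 1 \<Longrightarrow> X i \<in> borel_measurable M"
    and "\<And>i x. i \<ge> 1 \<Longrightarrow> measure M {\<omega> \<in> space M. X i \<omega> \<le> x} = F x"
    and "0 < p" "p < 1"
    and "phi_mixing M X"
    and "summable (\<lambda>n. sqrt (phi_mix M X (Suc n)))"
    and "\<exists>e>0. \<exists>K. \<forall>x. \<bar>x - quantile F p\<bar> < e \<longrightarrow>
            (F has_real_derivative f x) (at x) \<and> (f has_real_derivative f' x) (at x) \<and> \<bar>f' x\<bar> \<le> K"
    and "f (quantile F p) > 0"
  shows "\<forall>\<delta>>0. AE \<omega> in M. eventually (\<lambda>n.
      \<bar>quantile (emp_df X n \<omega>) p - quantile F p\<bar>
        \<le> (2 * sqrt (4 * (1 + 4 * (\<Sum>n. sqrt (phi_mix M X (Suc n))))) + \<delta>) * sqrt (ln (real n))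
           / (f (quantile F p) * sqrt (real n))) sequentially"
proof (intro allI impI)
  fix \<delta> :: real assume \<delta>: "\<delta> > 0"
  interpret rv_sequence M X by (intro rv_sequence.intro rv_sequence_axioms.intro assms(1,2))
  define \<xi> where "\<xi> = quantile F p"
  define C where "C = 2 * sqrt (4 * (1 + 4 * phi_root_sum M X))"
  have "0 \<le> phi_root_sum M X" using phi_root_sum_nonneg assms(7) .
  then have C: "0 < C" "32 * (1/4 + 2 * phi_root_sum M X) \<le> C\<^sup>2"
    unfolding C_def by (simp_all add: power_mult_distrib)
  have deriv: "(F has_real_derivative f \<xi>) (at \<xi>)" using assms(8) unfolding \<xi>_def by force
  have "F \<xi> = p"
    using cdf_properties[of "X 1" F] assms(2,3) assms(4,5) DERIV_isCont[OF deriv]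
    unfolding \<xi>_def by (intro cdf_quantile_eq) auto
  then have gap: "eventually (\<lambda>n. C * sqrt (real n) * sqrt (ln (real n))
        \<le> real n * (F (\<xi> + (C + \<delta>) * sqrt (ln (real n)) / (f \<xi> * sqrt (real n))) - p)
      \<and> C * sqrt (real n) * sqrt (ln (real n))
        \<le> real n * (p - F (\<xi> - (C + \<delta>) * sqrt (ln (real n)) / (f \<xi> * sqrt (real n))))) sequentially"
    using eventually_cdf_gap[OF deriv assms(9)[folded \<xi>_def] C(1) \<delta>] by simp
  have anti: "antimono (phi_mix M X)" using assms(6) by (simp add: phi_mixing_def)
  have "AE \<omega> in M. eventually (\<lambda>n. \<bar>quantile (emp_df X n \<omega>) p - \<xi>\<bar>
      \<le> (C + \<delta>) * sqrt (ln (real n)) / (f \<xi> * sqrt (real n))) sequentially"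
    using assms(3-5) by (intro AE_eventually_abs_emp_quantile_diff_le[OF anti assms(7) _ _ _ C gap])
      (auto simp: le_event_def)
  then show "AE \<omega> in M. eventually (\<lambda>n. \<bar>quantile (emp_df X n \<omega>) p - quantile F p\<bar>
      \<le> (2 * sqrt (4 * (1 + 4 * (\<Sum>n. sqrt (phi_mix M X (Suc n))))) + \<delta>) * sqrt (ln (real n))
         / (f (quantile F p) * sqrt (real n))) sequentially"
    unfolding \<xi>_def C_def phi_root_sum_def .
qed

end
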